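(* Let $V$ be a commutative unital quantale whose underlying lattice is a frame and in which $k=\top$. If $(Y,b,+)$ is a strongly unital object in $\mathsf{VGrp}$, then for every $y\in Y$, \[b(0,y)=b(y,0)\otimes b(0,y).\]
   Context: A commutative unital quantale $V$ is a complete lattice (top $\top$, bottom $\bot$) with a commutative associative operation $\otimes$ with unit $k$ preserving arbitrary joins in each variable. A $V$-category $(X,a)$: $a\colon X\times X\to V$ with $k\le a(x,x)$ and $a(x,x')\otimes a(x',x'')\le a(x,x'')$. A $V$-group $(X,a,+)$ is a $V$-category with a group structure (additive, not necessarily abelian) such that $a(x_1,x_2)\otimes a(x_1',x_2')\le a(x_1+x_1',x_2+x_2')$; $V$-homomorphisms are group homomorphisms $f$ with $a(x,x')\le b(f(x),f(x'))$; this is the category $\mathsf{VGrp}$, pointed when $k=\top$. Limits are computed as in groups with the initial structure; the product of $(X,a),(Y,b)$ carries $(a\wedge b)((x,y),(x',y'))=a(x,x')\wedge b(y,y')$; kernels and pullbacks carry the restricted structure. Two morphisms with common codomain are jointly strongly epimorphic if whenever both factor through a monomorphism $m$, $m$ is an isomorphism. A point (split epimorphism $f\colon A\to Y$ with chosen section $s$) is strong if the kernel of $f$ and $s$ are jointly strongly epimorphic, and stably strong if every pullback of it along any morphism $g\colon Z\to Y$ (with induced section) is strong. An object $Y$ is strongly unital if the point $(\pi_2\colon Y\times Y\to Y,\ \langle 1,1\rangle)$ is stably strong. *)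

theory Defs
  imports "HOL-Algebra.Coset"
begin

definition comm_unital_quantale :: "('v::complete_lattice \<Rightarrow> 'v \<Rightarrow> 'v) \<Rightarrow> 'v \<Rightarrow> bool" where
  "comm_unital_quantale T k \<longleftrightarrow>
     (\<forall>x y. T x y = T y x) \<and>
     (\<forall>x y z. T (T x y) z = T x (T y z)) \<and>
     (\<forall>x. T k x = x \<and> T x k = x) \<and>
     (\<forall>x S. T x (Sup S) = Sup (T x ` S)) \<and>
     (\<forall>x S. T (Sup S) x = Sup ((\<lambda>s. T s x) ` S))"

definition is_frame :: "'v::complete_lattice itself \<Rightarrow> bool" where
  "is_frame _ \<longleftrightarrow> (\<forall>(x::'v) S. inf x (Sup S) = Sup (inf x ` S))"

definition vcat :: "('v::complete_lattice \<Rightarrow> 'v \<Rightarrow> 'v) \<Rightarrow> 'v \<Rightarrow> 'a set \<Rightarrow> ('a \<Rightarrow> 'a \<Rightarrow> 'v) \<Rightarrow> bool" where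
  "vcat T k X a \<longleftrightarrow>
     (\<forall>x\<in>X. k \<le> a x x) \<and>
     (\<forall>x\<in>X. \<forall>x'\<in>X. \<forall>x''\<in>X. T (a x x') (a x' x'') \<le> a x x'')"

text \<open>A V-group: a group (written multiplicatively in HOL-Algebra; the paper writes it
  additively, with neutral element 0 = one G) with a V-category structure on its carrier
  such that the group operation is a V-functor.\<close>
definition vgrp :: "('v::complete_lattice \<Rightarrow> 'v \<Rightarrow> 'v) \<Rightarrow> 'v \<Rightarrow> 'a monoid \<Rightarrow> ('a \<Rightarrow> 'a \<Rightarrow> 'v) \<Rightarrow> bool" where
  "vgrp T k G a \<longleftrightarrow> group G \<and> vcat T k (carrier G) a \<and>
     (\<forall>x1\<in>carrier G. \<forall>x2\<in>carrier G. \<forall>x1'\<in>carrier G. \<forall>x2'\<in>carrier G.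
        T (a x1 x2) (a x1' x2') \<le> a (x1 \<otimes>\<^bsub>G\<^esub> x1') (x2 \<otimes>\<^bsub>G\<^esub> x2'))"

definition vhom :: "'a monoid \<Rightarrow> ('a \<Rightarrow> 'a \<Rightarrow> 'v::complete_lattice) \<Rightarrow> 'b monoid \<Rightarrow> ('b \<Rightarrow> 'b \<Rightarrow> 'v) \<Rightarrow> ('a \<Rightarrow> 'b) \<Rightarrow> bool" where
  "vhom G a H b f \<longleftrightarrow> f \<in> hom G H \<and> (\<forall>x\<in>carrier G. \<forall>x'\<in>carrier G. a x x' \<le> b (f x) (f x'))"

text \<open>Monomorphism (left cancellable), with test objects whose carrier lives in the same
  type as the domain (this suffices, e.g. the kernel of m is such a test object).\<close>
definition vmono :: "('v::complete_lattice \<Rightarrow> 'v \<Rightarrow> 'v) \<Rightarrow> 'v \<Rightarrow> 'a monoid \<Rightarrow> ('a \<Rightarrow> 'a \<Rightarrow> 'v) \<Rightarrow> 'b monoid \<Rightarrow> ('b \<Rightarrow> 'b \<Rightarrow> 'v) \<Rightarrow> ('a \<Rightarrow> 'b) \<Rightarrow> bool" where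
  "vmono T k M c A a m \<longleftrightarrow> vhom M c A a m \<and>
     (\<forall>(W::'a monoid) w u v. vgrp T k W w \<and> vhom W w M c u \<and> vhom W w M c v \<and>
        (\<forall>x\<in>carrier W. m (u x) = m (v x)) \<longrightarrow> (\<forall>x\<in>carrier W. u x = v x))"

definition viso :: "'a monoid \<Rightarrow> ('a \<Rightarrow> 'a \<Rightarrow> 'v::complete_lattice) \<Rightarrow> 'b monoid \<Rightarrow> ('b \<Rightarrow> 'b \<Rightarrow> 'v) \<Rightarrow> ('a \<Rightarrow> 'b) \<Rightarrow> bool" where
  "viso M c A a m \<longleftrightarrow> vhom M c A a m \<and>
     (\<exists>n. vhom A a M c n \<and> (\<forall>x\<in>carrier M. n (m x) = x) \<and> (\<forall>x\<in>carrier A. m (n x) = x))"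

text \<open>Two morphisms p : K \<rightarrow> A and q : Y \<rightarrow> A are jointly strongly epimorphic if whenever
  both factor through a monomorphism m : M \<rightarrow> A, m is an isomorphism.  (Up to isomorphism
  every monomorphism into A has domain in the carrier type of A.)\<close>
definition jointly_strong_epi ::
  "('v::complete_lattice \<Rightarrow> 'v \<Rightarrow> 'v) \<Rightarrow> 'v \<Rightarrow> 'k monoid \<Rightarrow> ('k \<Rightarrow> 'k \<Rightarrow> 'v) \<Rightarrow> ('k \<Rightarrow> 'p)
    \<Rightarrow> 'y monoid \<Rightarrow> ('y \<Rightarrow> 'y \<Rightarrow> 'v) \<Rightarrow> ('y \<Rightarrow> 'p) \<Rightarrow> 'p monoid \<Rightarrow> ('p \<Rightarrow> 'p \<Rightarrow> 'v) \<Rightarrow> bool" where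
  "jointly_strong_epi T k K ka p Y b q A a \<longleftrightarrow>
     (\<forall>(M::'p monoid) c m u v.
        vgrp T k M c \<and> vmono T k M c A a m \<and> vhom K ka M c u \<and> vhom Y b M c v \<and>
        (\<forall>x\<in>carrier K. m (u x) = p x) \<and> (\<forall>y\<in>carrier Y. m (v y) = q y)
        \<longrightarrow> viso M c A a m)"

definition vkernel :: "'p monoid \<Rightarrow> 'y monoid \<Rightarrow> ('p \<Rightarrow> 'y) \<Rightarrow> 'p monoid" where
  "vkernel A Y f = A\<lparr>carrier := kernel A Y f\<rparr>"

definition strong_point ::
  "('v::complete_lattice \<Rightarrow> 'v \<Rightarrow> 'v) \<Rightarrow> 'v \<Rightarrow> 'p monoid \<Rightarrow> ('p \<Rightarrow> 'p \<Rightarrow> 'v)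
    \<Rightarrow> 'y monoid \<Rightarrow> ('y \<Rightarrow> 'y \<Rightarrow> 'v) \<Rightarrow> ('p \<Rightarrow> 'y) \<Rightarrow> ('y \<Rightarrow> 'p) \<Rightarrow> bool" where
  "strong_point T k A a Y b f s \<longleftrightarrow>
     jointly_strong_epi T k (vkernel A Y f) a (\<lambda>x. x) Y b s A a"

definition pb_grp :: "'z monoid \<Rightarrow> ('z \<Rightarrow> 'y) \<Rightarrow> 'p monoid \<Rightarrow> ('p \<Rightarrow> 'y) \<Rightarrow> ('z \<times> 'p) monoid" where
  "pb_grp Z g A f = (Z \<times>\<times> A)\<lparr>carrier := {(z, x). z \<in> carrier Z \<and> x \<in> carrier A \<and> g z = f x}\<rparr>"

definition prod_str :: "('z \<Rightarrow> 'z \<Rightarrow> 'v::complete_lattice) \<Rightarrow> ('p \<Rightarrow> 'p \<Rightarrow> 'v) \<Rightarrow> ('z \<times> 'p \<Rightarrow> 'z \<times> 'p \<Rightarrow> 'v)" where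
  "prod_str c a = (\<lambda>(z, x) (z', x'). inf (c z z') (a x x'))"

text \<open>The point Y \<times> Y \<rightarrow> Y (second projection, diagonal section) is stably strong:
  every pullback of it along any V-homomorphism g : Z \<rightarrow> Y (with the induced section
  z \<mapsto> (z, (g z, g z))) is strong.  Test objects Z range over V-groups whose carrier lives
  in the carrier type of Y.\<close>
definition strongly_unital :: "('v::complete_lattice \<Rightarrow> 'v \<Rightarrow> 'v) \<Rightarrow> 'v \<Rightarrow> 'a monoid \<Rightarrow> ('a \<Rightarrow> 'a \<Rightarrow> 'v) \<Rightarrow> bool" where
  "strongly_unital T k Y b \<longleftrightarrow>
     (\<forall>(Z::'a monoid) c g. vgrp T k Z c \<and> vhom Z c Y b g \<longrightarrow>
        strong_point T k (pb_grp Z g (Y \<times>\<times> Y) snd) (prod_str c (prod_str b b)) Z c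
          fst (\<lambda>z. (z, (g z, g z))))"

end

theory Submission
  imports Defs "HOL-Algebra.Elementary_Groups"
begin

text \<open>
  Write the group additively, let \<open>N = b(0, y)\<close> and let \<open>Z\<close> be the subgroup of multiples of \<open>y\<close>,
  with the structure \<open>c(z, z') = \<Squnion>{N\<^sup>n | z' = z + n y}\<close>, so that the inclusion \<open>Z \<rightarrow> Y\<close> is a
  V-homomorphism. Pulling the point \<open>\<pi>\<^sub>2 : Y \<times> Y \<rightarrow> Y\<close> back along it gives a point over \<open>Z\<close> whose
  total object \<open>A\<close> consists of the triples \<open>(z, x, z)\<close>. A second V-group structure on \<open>A\<close> is
  \<open>d(p, q) = \<parallel>-p + q\<parallel>\<close>, where \<open>\<parallel>(z, x, z)\<parallel> = \<Squnion> b(0, u) \<otimes> N\<^sup>n\<close> over all ways of writing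
  \<open>x = u + w\<close> with \<open>w\<close> a sum of \<open>n\<close> conjugates of \<open>y\<close> and \<open>z = n y\<close>. It dominates the pullback structure on the kernel
  and on the image of the section, so strongness of the point makes it dominate everywhere.
  At the pair \<open>0, (y, 0, y)\<close> the pullback structure is at least \<open>N\<close>, whereas a splitting
  \<open>0 = u + w\<close> with \<open>n y = y\<close> costs at most \<open>b(y, 0) \<otimes> N\<close>: for \<open>n = 1\<close> the element \<open>-u\<close> is a
  conjugate of \<open>y\<close>, and for \<open>n \<ge> 2\<close> we have \<open>(n - 2) y = -y\<close>. The reverse inequality is
  integrality \<open>k = \<top>\<close>.
\<close>

locale cquantale =
  fixes T :: "'v::complete_lattice \<Rightarrow> 'v \<Rightarrow> 'v" and k :: 'v
  assumes comm_unital_quantale: "comm_unital_quantale T k"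
begin

lemma T_commute: "T x y = T y x"
  using comm_unital_quantale unfolding comm_unital_quantale_def by blast

lemma T_assoc: "T (T x y) z = T x (T y z)"
  using comm_unital_quantale unfolding comm_unital_quantale_def by blast

lemma T_unit_left [simp]: "T k x = x"
  using comm_unital_quantale unfolding comm_unital_quantale_def by blast

lemma T_unit_right [simp]: "T x k = x"
  using comm_unital_quantale unfolding comm_unital_quantale_def by blast

lemma T_Sup_right: "T x (Sup S) = Sup (T x ` S)"
  using comm_unital_quantale unfolding comm_unital_quantale_def by blast

lemma T_Sup_left: "T (Sup S) x = Sup ((\<lambda>s. T s x) ` S)"
  using comm_unital_quantale unfolding comm_unital_quantale_def by blast

sublocale abel_semigroup T
  by unfold_locales (use T_assoc T_commute in auto)

lemma T_mono_right: "c \<le> c' \<Longrightarrow> T x c \<le> T x c'"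
  using T_Sup_right[of x "{c, c'}"] by (simp add: sup.absorb2 le_iff_sup)

lemma T_mono: "a \<le> a' \<Longrightarrow> c \<le> c' \<Longrightarrow> T a c \<le> T a' c'"
  by (metis T_commute T_mono_right order_trans)

lemma T_inf_le1: "T a a' \<le> b \<Longrightarrow> T (inf a c) (inf a' c') \<le> b"
  by (meson T_mono inf_le1 order_trans)

lemma T_inf_le2: "T c c' \<le> b \<Longrightarrow> T (inf a c) (inf a' c') \<le> b"
  by (meson T_mono inf_le2 order_trans)

lemma T_le_right:
  assumes "k = Orderings.top"
  shows "T x c \<le> c"
proof -
  have "T x c \<le> T k c" by (rule T_mono) (simp_all add: assms)
  then show ?thesis by simp
qed

lemma T_Sup_Sup_le: "(\<And>a c. a \<in> A \<Longrightarrow> c \<in> C \<Longrightarrow> T a c \<le> x) \<Longrightarrow> T (Sup A) (Sup C) \<le> x"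
  by (simp add: T_Sup_left T_Sup_right SUP_le_iff)

end

primrec qpow :: "('v \<Rightarrow> 'v \<Rightarrow> 'v) \<Rightarrow> 'v \<Rightarrow> 'v \<Rightarrow> nat \<Rightarrow> 'v" where
  "qpow T k c 0 = k"
| "qpow T k c (Suc n) = T c (qpow T k c n)"

lemma (in cquantale) qpow_add: "qpow T k c (n + m) = T (qpow T k c n) (qpow T k c m)"
  by (induct n) (simp_all add: T_assoc)

primrec conj_prods :: "('a, 'm) monoid_scheme \<Rightarrow> 'a \<Rightarrow> nat \<Rightarrow> 'a set" where
  "conj_prods G y 0 = {\<one>\<^bsub>G\<^esub>}"
| "conj_prods G y (Suc n) =
     {u \<otimes>\<^bsub>G\<^esub> y \<otimes>\<^bsub>G\<^esub> inv\<^bsub>G\<^esub> u \<otimes>\<^bsub>G\<^esub> W | u W. u \<in> carrier G \<and> W \<in> conj_prods G y n}"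

context group
begin

lemma mult_inv_cancel_left [simp]: "x \<in> carrier G \<Longrightarrow> z \<in> carrier G \<Longrightarrow> x \<otimes> (inv x \<otimes> z) = z"
  by (simp add: m_assoc[symmetric])

lemma inv_mult_cancel_left [simp]: "x \<in> carrier G \<Longrightarrow> z \<in> carrier G \<Longrightarrow> inv x \<otimes> (x \<otimes> z) = z"
  by (simp add: m_assoc[symmetric])

lemma conj_prods_closed: "y \<in> carrier G \<Longrightarrow> W \<in> conj_prods G y n \<Longrightarrow> W \<in> carrier G"
  by (induct n arbitrary: W) auto

lemma conj_prods_conj:
  assumes "y \<in> carrier G" "t \<in> carrier G" "W \<in> conj_prods G y n"
  shows "t \<otimes> W \<otimes> inv t \<in> conj_prods G y n"
  using assms(3)
proof (induct n arbitrary: W)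
  case (Suc n)
  then obtain u V where u: "u \<in> carrier G" and V: "V \<in> conj_prods G y n"
    and W: "W = u \<otimes> y \<otimes> inv u \<otimes> V" by auto
  have "t \<otimes> W \<otimes> inv t = (t \<otimes> u) \<otimes> y \<otimes> inv (t \<otimes> u) \<otimes> (t \<otimes> V \<otimes> inv t)"
    using assms u conj_prods_closed[OF _ V] by (simp add: W m_assoc inv_mult_group)
  with Suc.hyps[OF V] u assms show ?case by auto
qed (use assms in simp)

lemma conj_prods_mult:
  assumes "y \<in> carrier G" "W \<in> conj_prods G y n" "W' \<in> conj_prods G y m"
  shows "W \<otimes> W' \<in> conj_prods G y (n + m)"
  using assms(2)
proof (induct n arbitrary: W)
  case 0
  then show ?case using assms(3) conj_prods_closed[OF assms(1,3)] by simp
next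
  case (Suc n)
  then obtain u V where u: "u \<in> carrier G" and V: "V \<in> conj_prods G y n"
    and W: "W = u \<otimes> y \<otimes> inv u \<otimes> V" by auto
  have "W \<otimes> W' = u \<otimes> y \<otimes> inv u \<otimes> (V \<otimes> W')"
    using assms u conj_prods_closed[OF _ V] conj_prods_closed[OF _ assms(3)] by (simp add: W m_assoc)
  with Suc.hyps[OF V] u show ?case by auto
qed

lemma nat_pow_in_conj_prods: "y \<in> carrier G \<Longrightarrow> y [^] n \<in> conj_prods G y n"
proof (induct n)
  case (Suc n)
  have "y [^] Suc n = \<one> \<otimes> y \<otimes> inv \<one> \<otimes> y [^] n"
    using Suc nat_pow_Suc2[of y n] by (simp del: nat_pow_Suc)
  with Suc show ?case by (simp only: conj_prods.simps) blast
qed simp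

end

locale vgroup = cquantale T k for T :: "'v::complete_lattice \<Rightarrow> 'v \<Rightarrow> 'v" and k +
  fixes G :: "'a monoid" (structure) and a :: "'a \<Rightarrow> 'a \<Rightarrow> 'v"
  assumes vgrp: "vgrp T k G a"

sublocale vgroup \<subseteq> group G
  using vgrp unfolding vgrp_def by blast

context vgroup
begin

lemma k_le_diag: "x \<in> carrier G \<Longrightarrow> k \<le> a x x"
  using vgrp unfolding vgrp_def vcat_def by blast

lemma mult_le:
  "\<lbrakk>x1 \<in> carrier G; x2 \<in> carrier G; x1' \<in> carrier G; x2' \<in> carrier G\<rbrakk>
    \<Longrightarrow> T (a x1 x2) (a x1' x2') \<le> a (x1 \<otimes> x1') (x2 \<otimes> x2')"
  using vgrp unfolding vgrp_def by blast

lemma translate_left_le: "\<lbrakk>t \<in> carrier G; x \<in> carrier G; x' \<in> carrier G\<rbrakk> \<Longrightarrow> a x x' \<le> a (t \<otimes> x) (t \<otimes> x')"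
  using mult_le[of t t x x'] T_mono[OF k_le_diag order_refl] by (metis T_unit_left order_trans)

lemma translate_right_le: "\<lbrakk>t \<in> carrier G; x \<in> carrier G; x' \<in> carrier G\<rbrakk> \<Longrightarrow> a x x' \<le> a (x \<otimes> t) (x' \<otimes> t)"
  using mult_le[of x x' t t] T_mono[OF order_refl k_le_diag] by (metis T_unit_right order_trans)

lemma translate_left: "\<lbrakk>t \<in> carrier G; x \<in> carrier G; x' \<in> carrier G\<rbrakk> \<Longrightarrow> a (t \<otimes> x) (t \<otimes> x') = a x x'"
  using translate_left_le[of t x x'] translate_left_le[of "inv t" "t \<otimes> x" "t \<otimes> x'"]
  by (simp add: antisym)

lemma translate_right: "\<lbrakk>t \<in> carrier G; x \<in> carrier G; x' \<in> carrier G\<rbrakk> \<Longrightarrow> a (x \<otimes> t) (x' \<otimes> t) = a x x'"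
  using translate_right_le[of t x x'] translate_right_le[of "inv t" "x \<otimes> t" "x' \<otimes> t"]
  by (simp add: antisym m_assoc)

lemma eq_norm: "\<lbrakk>x \<in> carrier G; x' \<in> carrier G\<rbrakk> \<Longrightarrow> a x x' = a \<one> (inv x \<otimes> x')"
  using translate_left[of "inv x" x x'] by simp

lemma norm_mult: "\<lbrakk>x \<in> carrier G; x' \<in> carrier G\<rbrakk> \<Longrightarrow> T (a \<one> x) (a \<one> x') \<le> a \<one> (x \<otimes> x')"
  using mult_le[of \<one> x \<one> x'] by simp

lemma norm_conj: "\<lbrakk>t \<in> carrier G; x \<in> carrier G\<rbrakk> \<Longrightarrow> a \<one> (t \<otimes> x \<otimes> inv t) = a \<one> x"
  using translate_left[of t \<one> x] translate_right[of "inv t" "t" "t \<otimes> x"] by simp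

lemma norm_inv: "x \<in> carrier G \<Longrightarrow> a \<one> (inv x) = a x \<one>"
  using eq_norm[of x \<one>] by simp

lemma qpow_le_norm_conj_prods:
  "\<lbrakk>y \<in> carrier G; W \<in> conj_prods G y n\<rbrakk> \<Longrightarrow> qpow T k (a \<one> y) n \<le> a \<one> W"
proof (induct n arbitrary: W)
  case 0
  then show ?case by (simp add: k_le_diag)
next
  case (Suc n)
  then obtain u V where u: "u \<in> carrier G" and V: "V \<in> conj_prods G y n"
    and W: "W = u \<otimes> y \<otimes> inv u \<otimes> V" by auto
  have "qpow T k (a \<one> y) (Suc n) \<le> T (a \<one> (u \<otimes> y \<otimes> inv u)) (a \<one> V)"
    using Suc.hyps[OF Suc.prems(1) V] Suc.prems u by (simp add: norm_conj T_mono_right)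
  also have "\<dots> \<le> a \<one> W"
    using Suc.prems u conj_prods_closed[OF _ V] by (simp add: W norm_mult)
  finally show ?case .
qed

end

definition norm_str :: "('a, 'm) monoid_scheme \<Rightarrow> ('a \<Rightarrow> 'v) \<Rightarrow> 'a \<Rightarrow> 'a \<Rightarrow> 'v" where
  "norm_str G \<rho> x x' = \<rho> (inv\<^bsub>G\<^esub> x \<otimes>\<^bsub>G\<^esub> x')"

context cquantale
begin

lemma vgrp_norm_str:
  fixes G :: "'a monoid" (structure)
  assumes "group G"
    and unit: "k \<le> \<rho> \<one>"
    and mult: "\<And>x x'. \<lbrakk>x \<in> carrier G; x' \<in> carrier G\<rbrakk> \<Longrightarrow> T (\<rho> x) (\<rho> x') \<le> \<rho> (x \<otimes> x')"
    and conj: "\<And>t x. \<lbrakk>t \<in> carrier G; x \<in> carrier G\<rbrakk> \<Longrightarrow> \<rho> x \<le> \<rho> (t \<otimes> x \<otimes> inv t)"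
  shows "vgrp T k G (norm_str G \<rho>)"
proof -
  interpret group G by fact
  have trans: "T (norm_str G \<rho> x x') (norm_str G \<rho> x' x'') \<le> norm_str G \<rho> x x''"
    if "x \<in> carrier G" "x' \<in> carrier G" "x'' \<in> carrier G" for x x' x''
    using mult[of "inv x \<otimes> x'" "inv x' \<otimes> x''"] that by (simp add: norm_str_def m_assoc)
  have "T (norm_str G \<rho> x1 x2) (norm_str G \<rho> x1' x2') \<le> norm_str G \<rho> (x1 \<otimes> x1') (x2 \<otimes> x2')"
    if "x1 \<in> carrier G" "x2 \<in> carrier G" "x1' \<in> carrier G" "x2' \<in> carrier G" for x1 x2 x1' x2'
  proof -
    have eq: "inv (x1 \<otimes> x1') \<otimes> (x2 \<otimes> x2') = inv x1' \<otimes> (inv x1 \<otimes> x2) \<otimes> inv (inv x1') \<otimes> (inv x1' \<otimes> x2')"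
      using that by (simp add: inv_mult_group m_assoc)
    have "T (\<rho> (inv x1 \<otimes> x2)) (\<rho> (inv x1' \<otimes> x2'))
        \<le> T (\<rho> (inv x1' \<otimes> (inv x1 \<otimes> x2) \<otimes> inv (inv x1'))) (\<rho> (inv x1' \<otimes> x2'))"
      using that by (intro T_mono conj) simp_all
    also have "\<dots> \<le> \<rho> (inv (x1 \<otimes> x1') \<otimes> (x2 \<otimes> x2'))"
      unfolding eq using that by (intro mult) simp_all
    finally show ?thesis by (simp add: norm_str_def)
  qed
  with trans unit show ?thesis
    unfolding vgrp_def vcat_def norm_str_def using group_axioms by simp
qed

lemma vgrp_inf:
  assumes "vgrp T k G a" "vgrp T k G c"
  shows "vgrp T k G (\<lambda>x x'. inf (a x x') (c x x'))"
  using assms unfolding vgrp_def vcat_def by (auto intro: T_inf_le1 T_inf_le2)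

lemma vgrp_DirProd:
  assumes "vgrp T k G a" "vgrp T k H c"
  shows "vgrp T k (G \<times>\<times> H) (prod_str a c)"
  using assms unfolding vgrp_def vcat_def prod_str_def
  by (auto simp: DirProd_group intro: T_inf_le1 T_inf_le2)

lemma vgrp_subgroup:
  assumes "vgrp T k G a" "subgroup H G"
  shows "vgrp T k (G\<lparr>carrier := H\<rparr>) a"
proof -
  have "group G" using assms(1) by (simp add: vgrp_def)
  then show ?thesis
    using assms subgroup.subset[OF assms(2)] subgroup.subgroup_is_group[OF assms(2)]
    unfolding vgrp_def vcat_def by (simp add: subset_iff)
qed

end

lemma subgroup_pullback:
  assumes "group Z" "group A" "group Y" "g \<in> hom Z Y" "f \<in> hom A Y"
  shows "subgroup {(z, x). z \<in> carrier Z \<and> x \<in> carrier A \<and> g z = f x} (Z \<times>\<times> A)"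
proof -
  interpret Z: group Z by fact
  interpret A: group A by fact
  interpret g: group_hom Z Y g using assms by (simp add: group_hom_def group_hom_axioms_def)
  interpret f: group_hom A Y f using assms by (simp add: group_hom_def group_hom_axioms_def)
  show ?thesis
    by (rule group.subgroupI[OF DirProd_group[OF assms(1,2)]])
      (auto simp: inv_DirProd assms(1,2) intro!: exI[of _ "\<one>\<^bsub>Z\<^esub>"] exI[of _ "\<one>\<^bsub>A\<^esub>"])
qed

lemma (in cquantale) vgrp_pb_grp:
  assumes "vgrp T k Z c" "vgrp T k A a" "group Y" "g \<in> hom Z Y" "f \<in> hom A Y"
  shows "vgrp T k (pb_grp Z g A f) (prod_str c a)"
  unfolding pb_grp_def using assms
  by (intro vgrp_subgroup vgrp_DirProd subgroup_pullback) (auto simp: vgrp_def)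

lemma (in cquantale) strong_point_le_structure:
  assumes strong: "strong_point T k A a Z c f s"
    and A: "vgrp T k A a" and r: "vgrp T k A r"
    and s: "vhom Z c A a s"
    and ker: "\<And>p q. \<lbrakk>p \<in> kernel A Z f; q \<in> kernel A Z f\<rbrakk> \<Longrightarrow> a p q \<le> r p q"
    and sec: "\<And>z z'. \<lbrakk>z \<in> carrier Z; z' \<in> carrier Z\<rbrakk> \<Longrightarrow> c z z' \<le> r (s z) (s z')"
    and p: "p \<in> carrier A" and q: "q \<in> carrier A"
  shows "a p q \<le> r p q"
proof -
  \<comment> \<open>Both legs of the point factor through the identity \<open>(A, a \<sqinter> r) \<rightarrow> (A, a)\<close>, a monomorphism.\<close>
  define m where "m p q = inf (a p q) (r p q)" for p q
  have m: "vgrp T k A m" unfolding m_def by (rule vgrp_inf[OF A r])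
  have "vmono T k A m A a (\<lambda>x. x)"
    unfolding vmono_def vhom_def hom_def m_def by simp
  moreover have "vhom (vkernel A Z f) a A m (\<lambda>x. x)"
    using ker unfolding vhom_def hom_def vkernel_def m_def kernel_def by auto
  moreover have "vhom Z c A m s"
    using s sec unfolding vhom_def m_def by simp
  ultimately have "viso A m A a (\<lambda>x. x)"
    using strong m unfolding strong_point_def jointly_strong_epi_def by blast
  then obtain n where n: "vhom A a A m n" "\<forall>x\<in>carrier A. n x = x"
    unfolding viso_def by auto
  have "a p q \<le> m (n p) (n q)" using n(1) p q unfolding vhom_def by blast
  with n(2) p q show ?thesis unfolding m_def by (simp add: le_infI2)
qed

locale vgroup_elem = vgroup +
  fixes y :: 'a
  assumes y: "y \<in> carrier G"
begin

abbreviation N where "N \<equiv> a \<one> y"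

definition Powers where
  "Powers = G\<lparr>carrier := range (\<lambda>i::int. y [^] i)\<rparr>"

definition powers_norm where
  "powers_norm z = Sup {qpow T k N n | n. z = y [^] n}"

definition powers_str where
  "powers_str = norm_str Powers powers_norm"

lemma carrier_Powers [simp]: "carrier Powers = range (\<lambda>i::int. y [^] i)"
  and mult_Powers [simp]: "mult Powers = mult G"
  and one_Powers [simp]: "one Powers = one G"
  by (simp_all add: Powers_def)

lemma subgroup_Powers: "subgroup (carrier Powers) G"
  using subgroup_of_powers[OF y] by simp

lemma group_Powers: "group Powers"
  using subgroup.subgroup_is_group[OF subgroup_Powers is_group] by (simp add: Powers_def)

lemma Powers_subset: "z \<in> carrier Powers \<Longrightarrow> z \<in> carrier G"
  using subgroup.mem_carrier[OF subgroup_Powers] .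

lemma inv_Powers [simp]: "z \<in> carrier Powers \<Longrightarrow> inv\<^bsub>Powers\<^esub> z = inv z"
  using m_inv_consistent[OF subgroup_Powers] by (simp add: Powers_def)

lemma Powers_commute: "\<lbrakk>z \<in> carrier Powers; z' \<in> carrier Powers\<rbrakk> \<Longrightarrow> z \<otimes> z' = z' \<otimes> z"
  by (clarsimp simp flip: int_pow_mult[OF y]) (simp add: add.commute)

lemma powers_norm_upper: "z = y [^] n \<Longrightarrow> qpow T k N n \<le> powers_norm z"
  unfolding powers_norm_def by (rule Sup_upper) blast

lemma powers_norm_le_norm: "powers_norm z \<le> a \<one> z"
  unfolding powers_norm_def
  using qpow_le_norm_conj_prods[OF y nat_pow_in_conj_prods[OF y]] by (auto intro: Sup_least)

lemma vgrp_Powers: "vgrp T k Powers powers_str"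
  unfolding powers_str_def
proof (rule vgrp_norm_str[OF group_Powers])
  show "k \<le> powers_norm \<one>\<^bsub>Powers\<^esub>"
    using powers_norm_upper[of "\<one>" 0] by simp
  show "T (powers_norm z) (powers_norm z') \<le> powers_norm (z \<otimes>\<^bsub>Powers\<^esub> z')" for z z'
    unfolding powers_norm_def[of z] powers_norm_def[of z']
  proof (rule T_Sup_Sup_le, safe)
    fix n m :: nat
    have "y [^] n \<otimes>\<^bsub>Powers\<^esub> y [^] m = y [^] (n + m)" using y by (simp add: nat_pow_mult)
    then show "T (qpow T k N n) (qpow T k N m) \<le> powers_norm (y [^] n \<otimes>\<^bsub>Powers\<^esub> y [^] m)"
      using powers_norm_upper[of _ "n + m"] by (simp add: qpow_add)
  qed
  show "powers_norm z \<le> powers_norm (t \<otimes>\<^bsub>Powers\<^esub> z \<otimes>\<^bsub>Powers\<^esub> inv\<^bsub>Powers\<^esub> t)"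
    if "t \<in> carrier Powers" "z \<in> carrier Powers" for t z
  proof -
    have "t \<otimes> z \<otimes> inv t = z"
      using that Powers_commute[OF that] Powers_subset[OF that(1)] Powers_subset[OF that(2)] by (simp add: m_assoc)
    with that show ?thesis by simp
  qed
qed

lemma vhom_Powers: "vhom Powers powers_str G a (\<lambda>z. z)"
proof -
  have "powers_norm (inv z \<otimes> z') \<le> a z z'" if "z \<in> carrier G" "z' \<in> carrier G" for z z'
    using powers_norm_le_norm[of "inv z \<otimes> z'"] eq_norm[OF that] by simp
  then show ?thesis
    unfolding vhom_def hom_def powers_str_def norm_str_def using Powers_subset by simp
qed

definition Pullback where
  "Pullback = pb_grp Powers (\<lambda>z. z) (G \<times>\<times> G) snd"

definition pullback_str where
  "pullback_str = prod_str powers_str (prod_str a a)"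

lemma snd_hom: "snd \<in> hom (G \<times>\<times> G) G"
  by (auto simp: hom_def mult_DirProd')

lemma vgrp_Pullback: "vgrp T k Pullback pullback_str"
  unfolding Pullback_def pullback_str_def using vhom_Powers snd_hom
  by (intro vgrp_pb_grp vgrp_Powers vgrp_DirProd vgrp is_group) (auto simp: vhom_def)

lemma group_Pullback: "group Pullback"
  using vgrp_Pullback by (simp add: vgrp_def)

lemma mem_Pullback [simp]: "(z, x1, x2) \<in> carrier Pullback \<longleftrightarrow> z \<in> carrier Powers \<and> x1 \<in> carrier G \<and> x2 = z"
  using Powers_subset by (auto simp: Pullback_def pb_grp_def)

lemma mult_Pullback [simp]: "(z, x1, x2) \<otimes>\<^bsub>Pullback\<^esub> (z', x1', x2') = (z \<otimes> z', x1 \<otimes> x1', x2 \<otimes> x2')"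
  by (simp add: Pullback_def pb_grp_def)

lemma one_Pullback [simp]: "\<one>\<^bsub>Pullback\<^esub> = (\<one>, \<one>, \<one>)"
  by (simp add: Pullback_def pb_grp_def)

lemma inv_Pullback [simp]:
  assumes "(z, x1, x2) \<in> carrier Pullback"
  shows "inv\<^bsub>Pullback\<^esub> (z, x1, x2) = (inv z, inv x1, inv x2)"
proof -
  have GG: "group (G \<times>\<times> G)" by (simp add: DirProd_group is_group)
  have "subgroup {(z, x). z \<in> carrier Powers \<and> x \<in> carrier (G \<times>\<times> G) \<and> z = snd x} (Powers \<times>\<times> (G \<times>\<times> G))"
    using vhom_Powers snd_hom by (intro subgroup_pullback group_Powers GG is_group) (simp_all add: vhom_def)
  then have "subgroup (carrier Pullback) (Powers \<times>\<times> (G \<times>\<times> G))"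
    by (simp add: Pullback_def pb_grp_def)
  moreover have "Pullback = (Powers \<times>\<times> (G \<times>\<times> G))\<lparr>carrier := carrier Pullback\<rparr>"
    by (simp add: Pullback_def pb_grp_def)
  ultimately have "inv\<^bsub>Pullback\<^esub> (z, x1, x2) = inv\<^bsub>Powers \<times>\<times> (G \<times>\<times> G)\<^esub> (z, x1, x2)"
    using group.m_inv_consistent[OF DirProd_group[OF group_Powers GG] _ assms] by metis
  with assms Powers_subset show ?thesis by (simp add: group_Powers GG is_group)
qed

definition split_norm where
  "split_norm p = Sup {T (a \<one> A) (qpow T k N n) | A W n.
     A \<in> carrier G \<and> W \<in> conj_prods G y n \<and> fst (snd p) = A \<otimes> W \<and> fst p = y [^] n}"

lemma split_norm_upper:
  "\<lbrakk>A \<in> carrier G; W \<in> conj_prods G y n; x1 = A \<otimes> W; z = y [^] n\<rbrakk>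
    \<Longrightarrow> T (a \<one> A) (qpow T k N n) \<le> split_norm (z, x1, x2)"
  unfolding split_norm_def by (rule Sup_upper) auto

lemma split_norm_least:
  "(\<And>A W n. \<lbrakk>A \<in> carrier G; W \<in> conj_prods G y n; x1 = A \<otimes> W; z = y [^] n\<rbrakk>
      \<Longrightarrow> T (a \<one> A) (qpow T k N n) \<le> v)
    \<Longrightarrow> split_norm (z, x1, x2) \<le> v"
  unfolding split_norm_def by (rule Sup_least) auto

lemma split_norm_mult:
  assumes "x1 \<in> carrier G" "x1' \<in> carrier G"
  shows "T (split_norm (z, x1, x2)) (split_norm (z', x1', x2')) \<le> split_norm (z \<otimes> z', x1 \<otimes> x1', x2 \<otimes> x2')"
  unfolding split_norm_def[of "(z, x1, x2)"] split_norm_def[of "(z', x1', x2')"]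
proof (rule T_Sup_Sup_le, elim CollectE exE conjE, goal_cases)
  case (1 u u' A A' W W' n n')
  then have u: "u = T (a \<one> A) (qpow T k N n)" "u' = T (a \<one> A') (qpow T k N n')"
    and A: "A \<in> carrier G" "W \<in> conj_prods G y n" "x1 = A \<otimes> W" "z = y [^] n"
    and A': "A' \<in> carrier G" "W' \<in> conj_prods G y n'" "x1' = A' \<otimes> W'" "z' = y [^] n'"
    by simp_all
  have W: "W \<in> carrier G" "W' \<in> carrier G" using A A' conj_prods_closed[OF y] by auto
  have "inv A' \<otimes> W \<otimes> inv (inv A') \<otimes> W' \<in> conj_prods G y (n + n')"
    using A A' by (intro conj_prods_mult[OF y] conj_prods_conj[OF y]) simp_all
  moreover have "x1 \<otimes> x1' = (A \<otimes> A') \<otimes> (inv A' \<otimes> W \<otimes> inv (inv A') \<otimes> W')"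
    using A A' W by (simp add: m_assoc)
  moreover have "z \<otimes> z' = y [^] (n + n')" using A A' y by (simp add: nat_pow_mult)
  ultimately have upper: "T (a \<one> (A \<otimes> A')) (qpow T k N (n + n')) \<le> split_norm (z \<otimes> z', x1 \<otimes> x1', x2 \<otimes> x2')"
    using A A' by (intro split_norm_upper) simp_all
  have "T (T (a \<one> A) (qpow T k N n)) (T (a \<one> A') (qpow T k N n'))
      = T (T (a \<one> A) (a \<one> A')) (qpow T k N (n + n'))"
    by (simp add: qpow_add ac_simps)
  also have "\<dots> \<le> T (a \<one> (A \<otimes> A')) (qpow T k N (n + n'))"
    using A A' by (simp add: T_mono norm_mult)
  also note upper
  finally show ?case unfolding u .
qed

lemma split_norm_conj:
  assumes "u \<in> carrier G"
  shows "split_norm (z, x1, x2) \<le> split_norm (z, u \<otimes> x1 \<otimes> inv u, x2')"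
proof (rule split_norm_least)
  fix A W n assume A: "A \<in> carrier G" "W \<in> conj_prods G y n" "x1 = A \<otimes> W" "z = y [^] n"
  have "u \<otimes> x1 \<otimes> inv u = (u \<otimes> A \<otimes> inv u) \<otimes> (u \<otimes> W \<otimes> inv u)"
    using A assms conj_prods_closed[OF y A(2)] by (simp add: m_assoc)
  then have "T (a \<one> (u \<otimes> A \<otimes> inv u)) (qpow T k N n) \<le> split_norm (z, u \<otimes> x1 \<otimes> inv u, x2')"
    using A assms conj_prods_conj[OF y assms A(2)] by (intro split_norm_upper) simp_all
  with A assms show "T (a \<one> A) (qpow T k N n) \<le> split_norm (z, u \<otimes> x1 \<otimes> inv u, x2')"
    by (simp add: norm_conj)
qed

lemma vgrp_split_norm: "vgrp T k Pullback (norm_str Pullback split_norm)"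
proof (rule vgrp_norm_str[OF group_Pullback])
  have "k \<le> T (a \<one> \<one>) (qpow T k N 0)" by (simp add: k_le_diag)
  also have "\<dots> \<le> split_norm (\<one>, \<one>, \<one>)" by (rule split_norm_upper[where W = \<one>]) simp_all
  finally show "k \<le> split_norm \<one>\<^bsub>Pullback\<^esub>" by simp
  show "T (split_norm p) (split_norm p') \<le> split_norm (p \<otimes>\<^bsub>Pullback\<^esub> p')"
    if "p \<in> carrier Pullback" "p' \<in> carrier Pullback" for p p'
    using that split_norm_mult by (cases p; cases p') auto
  show "split_norm p \<le> split_norm (t \<otimes>\<^bsub>Pullback\<^esub> p \<otimes>\<^bsub>Pullback\<^esub> inv\<^bsub>Pullback\<^esub> t)"
    if t_mem: "t \<in> carrier Pullback" and p_mem: "p \<in> carrier Pullback" for t p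
  proof -
    obtain z x1 where p: "p = (z, x1, z)" using p_mem by (cases p) auto
    obtain t0 u where t: "t = (t0, u, t0)" using t_mem by (cases t) auto
    have "t0 \<otimes> z \<otimes> inv t0 = z"
      using t_mem p_mem Powers_commute[of t0 z] Powers_subset by (simp add: p t m_assoc)
    then have "t \<otimes>\<^bsub>Pullback\<^esub> p \<otimes>\<^bsub>Pullback\<^esub> inv\<^bsub>Pullback\<^esub> t = (z, u \<otimes> x1 \<otimes> inv u, z)"
      using t_mem by (simp add: p t)
    with t_mem show ?thesis
      using split_norm_conj[of u] by (simp add: p t)
  qed
qed

lemma pullback_str_eq [simp]:
  "pullback_str (z, x1, x2) (z', x1', x2') = inf (powers_str z z') (inf (a x1 x1') (a x2 x2'))"
  by (simp add: pullback_str_def prod_str_def)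

lemma powers_norm_le_split_norm: "powers_norm w \<le> split_norm (w, w, w')"
  unfolding powers_norm_def
proof (rule Sup_least, clarify)
  fix n
  have "qpow T k N n \<le> T (a \<one> \<one>) (qpow T k N n)"
    using T_mono[OF k_le_diag order_refl] by simp
  also have "\<dots> \<le> split_norm (y [^] n, y [^] n, w')"
    using y nat_pow_in_conj_prods[OF y] by (intro split_norm_upper[where W = "y [^] n"]) simp_all
  finally show "qpow T k N n \<le> split_norm (y [^] n, y [^] n, w')" .
qed

lemma pullback_str_le_split_norm:
  assumes "strongly_unital T k G a" "p \<in> carrier Pullback" "q \<in> carrier Pullback"
  shows "pullback_str p q \<le> norm_str Pullback split_norm p q"
proof (rule strong_point_le_structure[OF _ vgrp_Pullback vgrp_split_norm _ _ _ assms(2,3)])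
  have "strong_point T k (pb_grp Powers (\<lambda>z. z) (G \<times>\<times> G) snd) (prod_str powers_str (prod_str a a))
      Powers powers_str fst (\<lambda>z. (z, z, z))"
    using assms(1) vgrp_Powers vhom_Powers unfolding strongly_unital_def by simp
  then show "strong_point T k Pullback pullback_str Powers powers_str fst (\<lambda>z. (z, z, z))"
    by (simp add: Pullback_def pullback_str_def)
  show "vhom Powers powers_str Pullback pullback_str (\<lambda>z. (z, z, z))"
    using vhom_Powers by (auto simp: vhom_def hom_def)
  show "pullback_str p q \<le> norm_str Pullback split_norm p q"
    if pK: "p \<in> kernel Pullback Powers fst" and qK: "q \<in> kernel Pullback Powers fst" for p q
  proof -
    obtain x1 where p: "p = (\<one>, x1, \<one>)" and x1: "x1 \<in> carrier G"
      using pK unfolding kernel_def by (cases p) auto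
    obtain x1' where q: "q = (\<one>, x1', \<one>)" and x1': "x1' \<in> carrier G"
      using qK unfolding kernel_def by (cases q) auto
    have "a x1 x1' \<le> T (a \<one> (inv x1 \<otimes> x1')) (qpow T k N 0)"
      using eq_norm[OF x1 x1'] by simp
    also have "\<dots> \<le> split_norm (\<one>, inv x1 \<otimes> x1', \<one>)"
      using x1 x1' by (intro split_norm_upper[where W = \<one>]) simp_all
    finally show ?thesis
      using x1 x1' one_Powers subgroup.one_closed[OF subgroup_Powers]
      by (simp add: p q norm_str_def le_infI2 le_infI1)
  qed
  show "powers_str z z' \<le> norm_str Pullback split_norm (z, z, z) (z', z', z')"
    if "z \<in> carrier Powers" "z' \<in> carrier Powers" for z z'
    using that Powers_subset powers_norm_le_split_norm by (simp add: powers_str_def norm_str_def)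
qed

lemma split_norm_bound:
  assumes integral: "k = Orderings.top"
  shows "split_norm (y, \<one>, y) \<le> T (a y \<one>) N"
proof (rule split_norm_least)
  fix A W n
  assume A: "A \<in> carrier G" and W: "W \<in> conj_prods G y n" and AW: "\<one> = A \<otimes> W"
    and yn: "y = y [^] n"
  have Wc: "W \<in> carrier G" using conj_prods_closed[OF y W] .
  show "T (a \<one> A) (qpow T k N n) \<le> T (a y \<one>) N"
  proof (cases n)
    case 0
    then have "y = \<one>" using yn by simp
    moreover have "a \<one> \<one> = k" using k_le_diag[of \<one>] integral by (simp add: top_le)
    ultimately have "T (a y \<one>) N = k" by simp
    then show ?thesis using integral by (metis top_greatest)
  next
    case (Suc m)
    show ?thesis
    proof (cases m)
      case 0
      then obtain u where u: "u \<in> carrier G" and Wu: "W = u \<otimes> y \<otimes> inv u \<otimes> \<one>"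
        using W Suc by auto
      have "A = inv W" using A Wc AW by (metis inv_equality)
      also have "\<dots> = u \<otimes> inv y \<otimes> inv u" using u y by (simp add: Wu inv_mult_group m_assoc)
      finally have "a \<one> A = a y \<one>" using u y by (simp add: norm_conj norm_inv)
      then show ?thesis using Suc 0 by simp
    next
      case (Suc l)
      have "y [^] l \<otimes> y \<otimes> y = \<one> \<otimes> y"
        using yn \<open>n = Suc m\<close> Suc y by (simp add: m_assoc)
      then have "y [^] l \<otimes> y = \<one>" using y by (metis m_closed nat_pow_closed one_closed right_cancel)
      then have "y [^] l = inv y" using y by (metis inv_equality nat_pow_closed)
      then have "qpow T k N l \<le> a y \<one>"
        using qpow_le_norm_conj_prods[OF y nat_pow_in_conj_prods[OF y, of l]] norm_inv[OF y] by simp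
      have "T (a \<one> A) (qpow T k N n) = T (a \<one> A) (T N (T N (qpow T k N l)))"
        by (simp add: \<open>n = Suc m\<close> Suc)
      also have "\<dots> \<le> T N (T N (qpow T k N l))" by (rule T_le_right[OF integral])
      also have "\<dots> \<le> T N (qpow T k N l)" by (rule T_mono_right[OF T_le_right[OF integral]])
      also have "\<dots> \<le> T N (a y \<one>)" by (rule T_mono_right) fact
      finally show ?thesis by (simp add: T_commute)
    qed
  qed
qed

lemma strongly_unital_norm_le:
  assumes "strongly_unital T k G a" and integral: "k = Orderings.top"
  shows "N \<le> T (a y \<one>) N"
proof -
  have y_mem_Powers: "y \<in> carrier Powers"
    using int_pow_1[OF y] by (metis carrier_Powers rangeI)
  have one_mem_Powers: "\<one> \<in> carrier Powers"
    using subgroup.one_closed[OF subgroup_Powers] by simp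
  have "N \<le> powers_norm y"
    using powers_norm_upper[of y 1] y by simp
  moreover have "N \<le> a \<one> \<one>"
    using k_le_diag[of \<one>] integral by (simp add: top_unique)
  ultimately have "N \<le> pullback_str (\<one>, \<one>, \<one>) (y, \<one>, y)"
    using y one_mem_Powers by (simp add: powers_str_def norm_str_def)
  also have "\<dots> \<le> norm_str Pullback split_norm (\<one>, \<one>, \<one>) (y, \<one>, y)"
    using y y_mem_Powers one_mem_Powers by (intro pullback_str_le_split_norm[OF assms(1)]) simp_all
  also have "\<dots> = split_norm (y, \<one>, y)"
    using y y_mem_Powers one_mem_Powers by (simp add: norm_str_def)
  also have "\<dots> \<le> T (a y \<one>) N"
    by (rule split_norm_bound[OF integral])
  finally show ?thesis .
qed

end

theorem proposition6p4:
  fixes T :: "'v::complete_lattice \<Rightarrow> 'v \<Rightarrow> 'v" and k :: 'v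
    and Y :: "'a monoid" and b :: "'a \<Rightarrow> 'a \<Rightarrow> 'v" and y :: 'a
  assumes "comm_unital_quantale T k"
    and "is_frame TYPE('v)"
    and "k = (Orderings.top :: 'v)"
    and "vgrp T k Y b"
    and "strongly_unital T k Y b"
    and "y \<in> carrier Y"
  shows "b \<one>\<^bsub>Y\<^esub> y = T (b y \<one>\<^bsub>Y\<^esub>) (b \<one>\<^bsub>Y\<^esub> y)"
proof -
  interpret vgroup_elem T k Y b y
    using assms by (simp add: vgroup_elem_def vgroup_elem_axioms_def vgroup_def vgroup_axioms_def cquantale_def)
  show ?thesis
    using strongly_unital_norm_le[OF assms(5,3)] T_le_right[OF assms(3)] by (rule antisym)
qed

end
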